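(* Let $f_{r,k}(x)=x^2\exp(r-x)+k$ and $c=2$. For any $0\leq k<2$ there exists $r^*=r^*(k)$ such that for all $r\geq r^*(k)$, \[ f_{r,k}^2(c)<c<f_{r,k}(c). \] Moreover, for $0<k<2$ the value $r^*(k)$ can be chosen such that, in addition, for all $r\geq r^*(k)$ the interval $[f_{r,k}^2(c),f_{r,k}(c)]$ contains exactly one fixed point of $f_{r,k}$.
   Context: $c=2$ is the unique critical point of $f_{r,k}$ on $(0,\infty)$ (the point of maximum of $f_{r,k}$ on $[0,\infty)$). *)

theory Defs
  imports Complex_Main
begin

definition f_rk :: "real \<Rightarrow> real \<Rightarrow> real \<Rightarrow> real" where
  "f_rk r k x = x\<^sup>2 * exp (r - x) + k"

end

theory Submission
  imports Defs "HOL-Real_Asymp.Real_Asymp"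
begin

text \<open>As \<open>r \<rightarrow> \<infinity>\<close>, \<open>f 2 = 4 exp (r - 2) + k \<rightarrow> \<infinity>\<close> while
  \<open>f (f 2) \<rightarrow> k < 2\<close>. For uniqueness, once \<open>k\<^sup>2 exp (r - 2) > 2\<close>, every \<open>x\<close> with
  \<open>k \<le> f (f 2) \<le> x \<le> 2\<close> satisfies \<open>f x \<ge> k\<^sup>2 exp (r - 2) + k > x\<close>, so the fixed points in
  \<open>[f (f 2), f 2]\<close> lie in \<open>[2, f 2]\<close>. There \<open>x\<^sup>2 exp (- x)\<close> is decreasing, hence
  \<open>f x - x\<close> is strictly decreasing and changes sign exactly once.\<close>

lemma unique_fixpoint_between_orbit:
  fixes g :: "real \<Rightarrow> real"
  assumes cont: "continuous_on {c..g c} g"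
    and orbit: "g (g c) < c" "c < g c"
    and above_diag: "\<And>x. g (g c) \<le> x \<Longrightarrow> x \<le> c \<Longrightarrow> x < g x"
    and decr: "\<And>x y. c \<le> x \<Longrightarrow> x < y \<Longrightarrow> y \<le> g c \<Longrightarrow> g y - y < g x - x"
  shows "\<exists>!x. x \<in> {g (g c)..g c} \<and> g x = x"
proof -
  have "continuous_on {c..g c} (\<lambda>x. g x - x)"
    by (intro continuous_intros cont)
  then obtain x where x: "c \<le> x" "x \<le> g c" "g x - x = 0"
    using IVT2'[of "\<lambda>x. g x - x" "g c" 0 c] orbit by auto
  have right_of_c: "c < y" if "y \<in> {g (g c)..g c}" "g y = y" for y
    using above_diag[of y] that by force
  show ?thesis
  proof (rule ex1I[of _ x])
    show "x \<in> {g (g c)..g c} \<and> g x = x"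
      using x orbit by auto
  next
    fix y assume y: "y \<in> {g (g c)..g c} \<and> g y = y"
    with right_of_c have "c < y" "y \<le> g c" "g y = y"
      by auto
    then show "y = x"
      using x decr[of x y] decr[of y x] by (cases x y rule: linorder_cases) auto
  qed
qed

lemma sq_times_exp_neg_antimono:
  fixes x y :: real
  assumes "2 \<le> x" "x \<le> y"
  shows "y\<^sup>2 * exp (- y) \<le> x\<^sup>2 * exp (- x)"
proof (rule DERIV_nonpos_imp_nonincreasing[where f = "\<lambda>t. t\<^sup>2 * exp (- t)", OF \<open>x \<le> y\<close>])
  fix t assume "x \<le> t" "t \<le> y"
  then have "2 \<le> t"
    using assms by linarith
  have "((\<lambda>t. t\<^sup>2 * exp (- t)) has_real_derivative t * (2 - t) * exp (- t)) (at t)"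
    by (auto intro!: derivative_eq_intros simp: algebra_simps power2_eq_square)
  moreover have "t * (2 - t) * exp (- t) \<le> 0"
    using \<open>2 \<le> t\<close> by (simp add: mult_nonneg_nonpos mult_nonpos_nonneg)
  ultimately show "\<exists>d. ((\<lambda>t. t\<^sup>2 * exp (- t)) has_real_derivative d) (at t) \<and> d \<le> 0"
    by blast
qed

lemma f_rk_eq_exp_scaled: "f_rk r k x = exp r * (x\<^sup>2 * exp (- x)) + k"
  by (simp add: f_rk_def exp_diff exp_minus field_simps)

lemma f_rk_minus_id_strict_decreasing:
  assumes "2 \<le> x" "x < y"
  shows "f_rk r k y - y < f_rk r k x - x"
proof -
  have "exp r * (y\<^sup>2 * exp (- y)) \<le> exp r * (x\<^sup>2 * exp (- x))"
    using sq_times_exp_neg_antimono[of x y] assms by simp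
  then show ?thesis
    using \<open>x < y\<close> f_rk_eq_exp_scaled[of r k x] f_rk_eq_exp_scaled[of r k y] by linarith
qed

lemma f_rk_above_diagonal:
  assumes "0 < k" "2 < k\<^sup>2 * exp (r - 2)" "k \<le> x" "x \<le> 2"
  shows "x < f_rk r k x"
proof -
  have "k\<^sup>2 * exp (r - 2) \<le> x\<^sup>2 * exp (r - x)"
    using assms by (intro mult_mono power_mono) auto
  then show ?thesis
    using assms unfolding f_rk_def by linarith
qed

lemma f_rk_unique_fixpoint:
  assumes "0 < k" "2 < k\<^sup>2 * exp (r - 2)"
    and orbit: "f_rk r k (f_rk r k 2) < 2" "2 < f_rk r k 2"
  shows "\<exists>!x. x \<in> {f_rk r k (f_rk r k 2)..f_rk r k 2} \<and> f_rk r k x = x"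
proof (rule unique_fixpoint_between_orbit[OF _ orbit])
  show "continuous_on {2..f_rk r k 2} (f_rk r k)"
    unfolding f_rk_def by (intro continuous_intros)
  have "k \<le> f_rk r k (f_rk r k 2)"
    by (simp add: f_rk_def)
  then show "x < f_rk r k x" if "f_rk r k (f_rk r k 2) \<le> x" "x \<le> 2" for x
    using f_rk_above_diagonal[OF assms(1,2)] that by simp
qed (rule f_rk_minus_id_strict_decreasing)

lemma eventually_f_rk_orbit_around_2:
  assumes "k < 2"
  shows "\<forall>\<^sub>F r in at_top. f_rk r k (f_rk r k 2) < 2 \<and> 2 < f_rk r k 2"
proof (rule eventually_conj)
  have "((\<lambda>r. f_rk r k (f_rk r k 2)) \<longlongrightarrow> k) at_top"
    unfolding f_rk_def by real_asymp
  then show "\<forall>\<^sub>F r in at_top. f_rk r k (f_rk r k 2) < 2"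
    using assms by (rule order_tendstoD)
  have "filterlim (\<lambda>r. f_rk r k 2) at_top at_top"
    unfolding f_rk_def by real_asymp
  then show "\<forall>\<^sub>F r in at_top. 2 < f_rk r k 2"
    by (simp add: filterlim_at_top_dense)
qed

theorem lemma3p1:
  shows "(\<forall>k::real. 0 \<le> k \<and> k < 2 \<longrightarrow>
            (\<exists>rs::real. \<forall>r\<ge>rs. (f_rk r k ^^ 2) 2 < 2 \<and> 2 < f_rk r k 2))
       \<and> (\<forall>k::real. 0 < k \<and> k < 2 \<longrightarrow>
            (\<exists>rs::real. \<forall>r\<ge>rs. (f_rk r k ^^ 2) 2 < 2 \<and> 2 < f_rk r k 2 \<and>
               (\<exists>!x. x \<in> {(f_rk r k ^^ 2) 2 .. f_rk r k 2} \<and> f_rk r k x = x)))"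
proof -
  have iterate_twice: "(f_rk r k ^^ 2) x = f_rk r k (f_rk r k x)" for r k x
    by (simp add: numeral_2_eq_2)
  have unique_eventually: "\<forall>\<^sub>F r in at_top. f_rk r k (f_rk r k 2) < 2 \<and> 2 < f_rk r k 2 \<and>
      (\<exists>!x. x \<in> {f_rk r k (f_rk r k 2)..f_rk r k 2} \<and> f_rk r k x = x)"
    if "0 < k" "k < 2" for k
  proof -
    have "filterlim (\<lambda>r. k\<^sup>2 * exp (r - 2)) at_top at_top"
      using \<open>0 < k\<close> by real_asymp
    then have "\<forall>\<^sub>F r in at_top. 2 < k\<^sup>2 * exp (r - 2)"
      by (simp add: filterlim_at_top_dense)
    with eventually_f_rk_orbit_around_2[OF \<open>k < 2\<close>] show ?thesis
      by eventually_elim (use \<open>0 < k\<close> f_rk_unique_fixpoint in blast)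
  qed
  show ?thesis
    unfolding iterate_twice eventually_at_top_linorder[symmetric]
    using eventually_f_rk_orbit_around_2 unique_eventually by blast
qed

end
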